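(* For every integer $n\ge 1$, \[ \sum_{k=0}^{n}\Big(-\frac{1}{4}\Big)^k\binom{n}{k}\binom{1+2k}{k}\,k^2H_{1+2k} =\frac{3n(2-3n)}{(3-2n)(1-4n^2)4^n}\binom{1+2n}{n} \Big\{2H_{1+2n}-\frac{3}{2}H_n-\frac{3-8n-12n^2}{1-4n^2}+\frac{9+n(3-25n+6n^2)}{3n(3-2n)(2-3n)}\Big\}-\frac{1}{1+n}. \]
   Context: For an integer $m\ge 0$, $H_m$ denotes the $m$-th harmonic number: $H_0=0$ and $H_m=\sum_{j=1}^m \frac1j$ for $m\ge1$. $\binom{n}{k}$ is the usual binomial coefficient. *)

theory Defs
  imports "HOL-Analysis.Analysis"
begin

end

theory Submission
  imports Defs
begin

(*
  Creative telescoping.  With t(n,k) = (-1/4)^k C(n,k) C(2k+1,k), the summand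
  F(n,k) = t(n,k) k^2 H(2k+1) satisfies

    c0(n) F(n,k) + c1(n) F(n+1,k) + c2(n) F(n+2,k) = G(n,k+1) - G(n,k)

  for polynomials c0, c1, c2 and a certificate G(n,k) that is t(n+2,k) times a
  rational function of n and k linear in H(2k+1).  Summing over k shows that the
  left-hand side S(n) satisfies a second-order inhomogeneous recurrence.  Writing
  u(n) = C(2n+1,n)/4^n, the right-hand side is tau(n) u(n) (P(n) + r(n)) - 1/(n+1)
  with P(n) = 2 H(2n+1) - 3/2 H(n); both tau u and tau u (P + r) solve the
  homogeneous recurrence, -1/(n+1) is a particular solution, so both sides satisfy
  the same recurrence.  Its leading coefficient c2(n) is positive for n >= 1, and
  the two sides agree at n = 1 and n = 2.
*)

lemma second_order_recurrence_unique:
  fixes f g a b c :: "nat \<Rightarrow> 'a::field"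
  assumes leading_nonzero: "\<And>n. n \<ge> m \<Longrightarrow> c n \<noteq> 0"
    and same_recurrence: "\<And>n. n \<ge> m \<Longrightarrow>
      a n * f n + b n * f (n+1) + c n * f (n+2) = a n * g n + b n * g (n+1) + c n * g (n+2)"
    and initial: "f m = g m" "f (m+1) = g (m+1)"
    and "n \<ge> m"
  shows "f n = g n"
proof -
  have "f (m+j) = g (m+j) \<and> f (m+j+1) = g (m+j+1)" for j
  proof (induction j)
    case 0
    then show ?case using initial by simp
  next
    case (Suc j)
    then have "c (m+j) * f (m+j+2) = c (m+j) * g (m+j+2)"
      using same_recurrence[of "m+j"] by (simp add: add.assoc)
    then have "f (m+j+2) = g (m+j+2)"
      using leading_nonzero[of "m+j"] by simp
    with Suc show ?case by simp
  qed
  moreover obtain j where "n = m + j"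
    using \<open>n \<ge> m\<close> le_Suc_ex by blast
  ultimately show ?thesis
    by simp
qed

lemma creative_telescoping_second_order:
  fixes F :: "nat \<Rightarrow> nat \<Rightarrow> 'a::comm_ring" and G :: "nat \<Rightarrow> 'a"
  assumes telescoping: "\<And>k. a * F n k + b * F (n+1) k + c * F (n+2) k = G (Suc k) - G k"
    and vanishing: "\<And>m k. m < k \<Longrightarrow> F m k = 0"
  shows "a * (\<Sum>k\<le>n. F n k) + b * (\<Sum>k\<le>n+1. F (n+1) k) + c * (\<Sum>k\<le>n+2. F (n+2) k)
    = G (n+3) - G 0"
proof -
  have extend: "(\<Sum>k\<le>m. F m k) = (\<Sum>k<n+3. F m k)" if "m \<le> n+2" for m
    by (rule sum.mono_neutral_left) (use that vanishing in auto)
  have "a * (\<Sum>k\<le>n. F n k) + b * (\<Sum>k\<le>n+1. F (n+1) k) + c * (\<Sum>k\<le>n+2. F (n+2) k)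
      = (\<Sum>k<n+3. G (Suc k) - G k)"
    by (simp only: extend[of n] extend[of "n+1"] extend[of "n+2"] le_add1 add_le_cancel_left
        one_le_numeral sum_distrib_left sum.distrib[symmetric] telescoping)
  also have "\<dots> = G (n+3) - G 0"
    by (rule sum_lessThan_telescope)
  finally show ?thesis .
qed

lemma of_nat_Suc_choose_mult:
  "of_nat (Suc m choose k) * (of_nat m + 1 - of_nat k) = (of_nat m + 1) * (of_nat (m choose k) :: 'a::field_char_0)"
proof -
  have "of_nat (Suc m choose k) = ((of_nat m + 1 :: 'a) gchoose k)"
    by (simp add: binomial_gbinomial add.commute)
  then show ?thesis
    using gbinomial_absorb_comp[of "of_nat m + 1 :: 'a" k] by (simp add: binomial_gbinomial mult.commute)
qed

lemma of_nat_choose_Suc_mult: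
  "of_nat (m choose Suc k) * (of_nat k + 1) = (of_nat m - of_nat k) * (of_nat (m choose k) :: 'a::field_char_0)"
  using gbinomial_absorption[of k "of_nat m :: 'a"] gbinomial_absorb_comp[of "of_nat m :: 'a" k]
  by (simp add: binomial_gbinomial mult.commute add.commute)

lemma odd_central_choose_Suc:
  "(k + 2) * ((1 + 2*Suc k) choose Suc k) = 2 * (2*k + 3) * ((1 + 2*k) choose k)"
proof -
  have step1: "Suc k * ((1 + 2*Suc k) choose Suc k) = (2*k + 3) * ((2*k + 2) choose k)"
  proof -
    have "1 + 2*Suc k = Suc (2*k + 2)" "2*k + 3 = Suc (2*k + 2)"
      by simp_all
    then show ?thesis
      using Suc_times_binomial[of k "2*k + 2"] by (simp only:)
  qed
  have step2: "(k + 2) * ((2*k + 2) choose k) = (2*k + 2) * ((1 + 2*k) choose k)"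
  proof -
    have "2*k + 2 - k = k + 2" "2*k + 2 - 1 = 1 + 2*k"
      by simp_all
    then show ?thesis
      using binomial_absorb_comp[of "2*k + 2" k] by (simp only:)
  qed
  have "Suc k * ((k + 2) * ((1 + 2*Suc k) choose Suc k)) = (2*k + 3) * ((k + 2) * ((2*k + 2) choose k))"
    using step1 by (metis mult.left_commute)
  also have "\<dots> = Suc k * (2 * (2*k + 3) * ((1 + 2*k) choose k))"
    unfolding step2 by (simp add: algebra_simps)
  finally show ?thesis
    using mult_cancel1 by (metis Zero_not_Suc)
qed

lemma harm_odd_Suc:
  "harm (1 + 2*Suc k) = harm (1 + 2*k) + 1/(2 * real k + 2) + 1/(2 * real k + 3)"
proof -
  have "1 + 2*Suc k = Suc (Suc (1 + 2*k))"
    by simp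
  then show ?thesis
    by (simp add: harm_Suc inverse_eq_divide algebra_simps)
qed

text \<open>Clears denominators whose factors are given as nonzero simp facts; the resulting
  polynomial identity is left to \<open>algebra\<close>.\<close>
lemmas frac_normalise = add_frac_eq diff_frac_eq times_divide_times_eq times_divide_eq_left times_divide_eq_right
  minus_divide_left divide_divide_eq_left frac_eq_eq nonzero_eq_divide_eq nonzero_divide_eq_eq
  add_divide_eq_iff divide_add_eq_iff diff_divide_eq_iff divide_diff_eq_iff
  mult_eq_0_iff de_Morgan_disj numeral_neq_zero one_neq_zero simp_thms

text \<open>The recurrence and the certificate below are the output of Zeilberger's algorithm,
  with common factors removed; only their verification is needed.\<close>

definition rec_coeff0 :: "real \<Rightarrow> real" where
  "rec_coeff0 N = (N + 1) * (2*N - 3)^2 * (18*(N+1)^3 + 27*(N+1)^2 - 22*(N+1) - 6)"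
definition rec_coeff1 :: "real \<Rightarrow> real" where
  "rec_coeff1 N = - 2 * (N + 2) * (72*N^5 + 180*N^4 - 142*N^3 - 237*N^2 + 112*N + 24)"
definition rec_coeff2 :: "real \<Rightarrow> real" where
  "rec_coeff2 N = 4 * (N + 1)^2 * (N + 3) * (18*N^3 + 27*N^2 - 22*N - 6)"

lemma rec_coeff2_pos:
  fixes N :: real
  assumes "N \<ge> 1"
  shows "rec_coeff2 N > 0"
proof -
  have "N \<le> N^2" "N \<le> N^3"
    using power_increasing[of 1 2 N] power_increasing[of 1 3 N] assms by simp_all
  then have "18*N^3 + 27*N^2 - 22*N - 6 > 0"
    using assms by linarith
  then show ?thesis
    unfolding rec_coeff2_def using assms by simp
qed

definition cert_a :: "real \<Rightarrow> real \<Rightarrow> real" where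
  "cert_a N K = (324 + 1002*N + 1008*N^2 + 366*N^3 + 36*N^4)
     - (318 + 1170*N + 954*N^2 + 126*N^3 - 36*N^4) * K
     + (102 + 448*N + 142*N^2 - 216*N^3 - 72*N^4) * K^2"
definition cert_b :: "real \<Rightarrow> real \<Rightarrow> real" where
  "cert_b N K = (81 + 210*N + 147*N^2 + 18*N^3) + (42 + 42*N + 66*N^2 + 36*N^3) * K
     - (245 + 682*N + 549*N^2 + 126*N^3) * K^2 + (68 + 344*N + 324*N^2 + 72*N^3) * K^3"

lemma certificate_polynomial_identity:
  fixes N K h :: real
  shows "4*(K+1) * (rec_coeff0 N * (N+2-K) * (N+1-K) + rec_coeff1 N * (N+2-K) * (N+1) + rec_coeff2 N * (N+1) * (N+2)) * K^2 * h
    = - (N+1) * (N+2-K) * (2*K*(K+1)*(2*K+3) * cert_a N (K+1) * h + K*(4*K+5) * cert_a N (K+1) + 2*(2*K+3)*(N+1-K) * cert_b N (K+1))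
      - 4*(N+1)*(K+1)^2 * (K*(K-1) * cert_a N K * h + (N+2-K) * cert_b N K)"
  unfolding rec_coeff0_def rec_coeff1_def rec_coeff2_def cert_a_def cert_b_def
  by algebra

lemma certificate_rational_identity:
  fixes N K h :: real
  assumes "N \<ge> 0" "K \<ge> 0"
  shows "rec_coeff0 N * ((N+1-K)/(N+1) * ((N+2-K)/(N+2)) * K^2 * h)
      + rec_coeff1 N * ((N+2-K)/(N+2) * K^2 * h) + rec_coeff2 N * (K^2 * h)
    = - (2*K+3) * (N+2-K) / (2*(K+1))
        * ((K+1) * K * cert_a N (K+1) * (h + 1/(2*K+2) + 1/(2*K+3)) + (N+1-K) * cert_b N (K+1)) / (N+2)
      - (K+1) * (K*(K-1) * cert_a N K * h + (N+2-K) * cert_b N K) / (N+2)"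
proof -
  have "N + 1 \<noteq> 0" "N + 2 \<noteq> 0" "K + 1 \<noteq> 0" "2*K+2 \<noteq> 0" "2*K+3 \<noteq> 0"
    using assms by auto
  with certificate_polynomial_identity[of K N h] show ?thesis
    by (simp only: frac_normalise) algebra
qed

definition hypergeom_term :: "nat \<Rightarrow> nat \<Rightarrow> real" where
  "hypergeom_term n k = (-1/4)^k * real (n choose k) * real ((1+2*k) choose k)"

definition summand :: "nat \<Rightarrow> nat \<Rightarrow> real" where
  "summand n k = hypergeom_term n k * (real k)^2 * harm (1+2*k)"

definition certificate :: "nat \<Rightarrow> nat \<Rightarrow> real" where
  "certificate n k = hypergeom_term (n+2) k * (real k + 1)
     * (real k * (real k - 1) * cert_a (real n) (real k) * harm (1+2*k)
        + (real n + 2 - real k) * cert_b (real n) (real k)) / (real n + 2)"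

lemma hypergeom_term_Suc_left:
  "(real n + 1) * hypergeom_term n k = (real n + 1 - real k) * hypergeom_term (Suc n) k"
proof -
  define w :: real where "w = (-1/4)^k"
  show ?thesis
    using of_nat_Suc_choose_mult[of n k, where 'a=real]
    unfolding hypergeom_term_def w_def[symmetric] by algebra
qed

lemma hypergeom_term_Suc_right:
  "2 * (real k + 1) * (real k + 2) * hypergeom_term n (Suc k) = - (2 * real k + 3) * (real n - real k) * hypergeom_term n k"
proof -
  define w :: real where "w = (-1/4)^k"
  have "real ((1 + 2*Suc k) choose Suc k) * (real k + 2) = 2 * (2 * real k + 3) * real ((1 + 2*k) choose k)"
    using arg_cong[OF odd_central_choose_Suc[of k], of real]
    by (simp only: of_nat_mult of_nat_add of_nat_numeral mult.commute)
  with of_nat_choose_Suc_mult[of n k, where 'a=real] show ?thesis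
    unfolding hypergeom_term_def power_Suc w_def[symmetric] by algebra
qed

lemma certificate_Suc:
  "certificate n (Suc k) = hypergeom_term (n+2) k * (- (2 * real k + 3) * (real n + 2 - real k) / (2 * (real k + 1))
     * ((real k + 1) * real k * cert_a (real n) (real k + 1) * (harm (1+2*k) + 1/(2 * real k + 2) + 1/(2 * real k + 3))
        + (real n + 1 - real k) * cert_b (real n) (real k + 1)) / (real n + 2))"
proof -
  define N K h T where "N = real n" and "K = real k" and "h = (harm (1+2*k) :: real)"
    and "T = hypergeom_term (n+2) k"
  have shift: "hypergeom_term (n+2) (Suc k) * (K+2) = - (2*K+3) * (N+2-K) / (2*(K+1)) * T"
    using hypergeom_term_Suc_right[of k "n+2"] unfolding N_def K_def T_def
    by (simp add: eq_divide_eq algebra_simps)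
  have "certificate n (Suc k) = hypergeom_term (n+2) (Suc k) * (K+2)
      * ((K+1) * K * cert_a N (K+1) * (h + 1/(2*K+2) + 1/(2*K+3)) + (N+1-K) * cert_b N (K+1)) / (N+2)"
    unfolding certificate_def harm_odd_Suc N_def K_def h_def by (simp add: algebra_simps)
  also have "\<dots> = T * (- (2*K+3) * (N+2-K) / (2*(K+1))
      * ((K+1) * K * cert_a N (K+1) * (h + 1/(2*K+2) + 1/(2*K+3)) + (N+1-K) * cert_b N (K+1)) / (N+2))"
    unfolding shift by (simp only: ac_simps times_divide_eq_right times_divide_eq_left)
  finally show ?thesis
    unfolding N_def K_def h_def T_def .
qed

lemma summand_telescoping:
  "rec_coeff0 (real n) * summand n k + rec_coeff1 (real n) * summand (n+1) k
     + rec_coeff2 (real n) * summand (n+2) k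
   = certificate n (Suc k) - certificate n k"
proof -
  define N K h T where "N = real n" and "K = real k" and "h = (harm (1+2*k) :: real)"
    and "T = hypergeom_term (n+2) k"
  have nonneg: "N \<ge> 0" "K \<ge> 0"
    unfolding N_def K_def by simp_all
  have shift1: "hypergeom_term (n+1) k = (N+2-K)/(N+2) * T"
    using hypergeom_term_Suc_left[of "n+1" k] nonneg unfolding N_def K_def T_def
    by (simp add: eq_divide_eq algebra_simps)
  have shift0: "hypergeom_term n k = (N+1-K)/(N+1) * hypergeom_term (n+1) k"
    using hypergeom_term_Suc_left[of n k] nonneg unfolding N_def K_def
    by (simp add: eq_divide_eq algebra_simps)
  have S0: "summand n k = T * ((N+1-K)/(N+1) * ((N+2-K)/(N+2)) * K^2 * h)"
    unfolding summand_def shift0 shift1 K_def h_def by (simp only: ac_simps)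
  have S1: "summand (n+1) k = T * ((N+2-K)/(N+2) * K^2 * h)"
    unfolding summand_def shift1 K_def h_def by (simp only: ac_simps)
  have S2: "summand (n+2) k = T * (K^2 * h)"
    unfolding summand_def T_def K_def h_def by (simp only: ac_simps)
  have G0: "certificate n k = T * ((K+1) * (K*(K-1) * cert_a N K * h + (N+2-K) * cert_b N K) / (N+2))"
    unfolding certificate_def T_def N_def K_def h_def by simp
  have G1: "certificate n (Suc k) = T * (- (2*K+3) * (N+2-K) / (2*(K+1))
      * ((K+1) * K * cert_a N (K+1) * (h + 1/(2*K+2) + 1/(2*K+3)) + (N+1-K) * cert_b N (K+1)) / (N+2))"
    unfolding certificate_Suc N_def K_def h_def T_def ..
  have "rec_coeff0 N * summand n k + rec_coeff1 N * summand (n+1) k + rec_coeff2 N * summand (n+2) k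
     = T * (rec_coeff0 N * ((N+1-K)/(N+1) * ((N+2-K)/(N+2)) * K^2 * h)
            + rec_coeff1 N * ((N+2-K)/(N+2) * K^2 * h) + rec_coeff2 N * (K^2 * h))"
    unfolding S0 S1 S2 by (simp only: distrib_left mult.left_commute)
  also have "\<dots> = certificate n (Suc k) - certificate n k"
    unfolding certificate_rational_identity[OF nonneg] G0 G1 by (simp only: right_diff_distrib)
  finally show ?thesis
    unfolding N_def .
qed

lemma certificate_at_zero: "certificate n 0 = 3 * (real n + 1) * (6 * (real n)^2 + 43 * real n + 27)"
  unfolding certificate_def hypergeom_term_def cert_b_def by (simp add: field_simps) algebra

lemma sum_summand_recurrence:
  "rec_coeff0 (real n) * (\<Sum>k\<le>n. summand n k) + rec_coeff1 (real n) * (\<Sum>k\<le>n+1. summand (n+1) k)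
     + rec_coeff2 (real n) * (\<Sum>k\<le>n+2. summand (n+2) k)
   = - (3 * (real n + 1) * (6 * (real n)^2 + 43 * real n + 27))"
proof -
  have vanishing: "summand m k = 0" if "m < k" for m k
    using that unfolding summand_def hypergeom_term_def by simp
  have "rec_coeff0 (real n) * (\<Sum>k\<le>n. summand n k) + rec_coeff1 (real n) * (\<Sum>k\<le>n+1. summand (n+1) k)
     + rec_coeff2 (real n) * (\<Sum>k\<le>n+2. summand (n+2) k) = certificate n (n+3) - certificate n 0"
    using summand_telescoping vanishing by (rule creative_telescoping_second_order)
  also have "certificate n (n+3) = 0"
    unfolding certificate_def hypergeom_term_def by simp
  finally show ?thesis
    unfolding certificate_at_zero by simp
qed

definition cf_prefactor :: "real \<Rightarrow> real" where
  "cf_prefactor N = 3 * N * (2 - 3 * N) / ((3 - 2 * N) * (1 - 4 * N^2))"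

definition cf_rational :: "real \<Rightarrow> real" where
  "cf_rational N = - (3 - 8 * N - 12 * N^2) / (1 - 4 * N^2)
     + (9 + N * (3 - 25 * N + 6 * N^2)) / (3 * N * (3 - 2 * N) * (2 - 3 * N))"

definition scaled_central :: "nat \<Rightarrow> real" where
  "scaled_central n = real ((1+2*n) choose n) / 4^n"

definition harmonic_part :: "nat \<Rightarrow> real" where
  "harmonic_part n = 2 * harm (1+2*n) - 3/2 * harm n"

definition closed_form :: "nat \<Rightarrow> real" where
  "closed_form n = cf_prefactor (real n) * scaled_central n * (harmonic_part n + cf_rational (real n))
     - 1 / (real n + 1)"

lemma closed_form_eq:
  "closed_form n = 3 * real n * (2 - 3 * real n) / ((3 - 2 * real n) * (1 - 4 * (real n)^2) * 4^n)
     * real ((1+2*n) choose n)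
     * (2 * harm (1+2*n) - 3/2 * harm n
        - (3 - 8 * real n - 12 * (real n)^2) / (1 - 4 * (real n)^2)
        + (9 + real n * (3 - 25 * real n + 6 * (real n)^2))
          / (3 * real n * (3 - 2 * real n) * (2 - 3 * real n)))
   - 1 / (1 + real n)"
proof -
  have "3 * real n * (2 - 3 * real n) / ((3 - 2 * real n) * (1 - 4 * (real n)^2) * 4^n)
      * real ((1+2*n) choose n) = cf_prefactor (real n) * scaled_central n"
    unfolding cf_prefactor_def scaled_central_def by simp
  moreover have "2 * harm (1+2*n) - 3/2 * harm n
        - (3 - 8 * real n - 12 * (real n)^2) / (1 - 4 * (real n)^2)
        + (9 + real n * (3 - 25 * real n + 6 * (real n)^2))
          / (3 * real n * (3 - 2 * real n) * (2 - 3 * real n))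
      = harmonic_part n + cf_rational (real n)"
    unfolding harmonic_part_def cf_rational_def
    by (simp only: minus_divide_left[symmetric] diff_conv_add_uminus add.assoc)
  ultimately show ?thesis
    unfolding closed_form_def by (simp add: add.commute)
qed

lemma scaled_central_Suc:
  "scaled_central (Suc n) = scaled_central n * ((2 * real n + 3) / (2 * (real n + 2)))"
proof -
  define c c' q where "c = real ((1+2*n) choose n)" and "c' = real ((1 + 2*Suc n) choose Suc n)"
    and "q = (4::real) ^ n"
  have "(real n + 2) * c' = 2 * (2 * real n + 3) * c"
    using arg_cong[OF odd_central_choose_Suc[of n], of real] unfolding c_def c'_def
    by (simp only: of_nat_mult of_nat_add of_nat_numeral)
  moreover have "real n + 2 \<noteq> 0" "q \<noteq> 0"
    unfolding q_def by simp_all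
  ultimately have "c' / (4 * q) = c / q * ((2 * real n + 3) / (2 * (real n + 2)))"
    by (simp only: frac_normalise) algebra
  then show ?thesis
    unfolding scaled_central_def c_def c'_def q_def power_Suc .
qed

lemma harmonic_part_Suc:
  "harmonic_part (Suc n) = harmonic_part n + (2 / (2 * real n + 3) - 1 / (2 * (real n + 1)))"
proof -
  define h g where "h = (harm (1+2*n) :: real)" and "g = (harm n :: real)"
  have "harm (Suc n) = g + 1 / (real n + 1)"
    unfolding g_def harm_Suc by (simp add: inverse_eq_divide add.commute)
  moreover have "2 * (h + 1/(2 * real n + 2) + 1/(2 * real n + 3)) - 3/2 * (g + 1 / (real n + 1))
      = 2 * h - 3/2 * g + (2 / (2 * real n + 3) - 1 / (2 * (real n + 1)))"
  proof -
    have "real n + 1 \<noteq> 0" "2 * real n + 2 \<noteq> 0" "2 * real n + 3 \<noteq> 0"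
      by (simp_all add: add_nonneg_pos)
    then show ?thesis
      by (simp only: frac_normalise) algebra
  qed
  ultimately show ?thesis
    unfolding harmonic_part_def harm_odd_Suc h_def g_def by simp
qed

lemma cf_denominators_nonzero:
  fixes N :: real
  assumes "N \<ge> 1" "2 * N \<noteq> 3"
  shows "N \<noteq> 0" "3 - 2*N \<noteq> 0" "2 - 3*N \<noteq> 0" "1 - 4*N^2 \<noteq> 0"
    "3 - 2*(N+1) \<noteq> 0" "2 - 3*(N+1) \<noteq> 0" "1 - 4*(N+1)^2 \<noteq> 0"
    "3 - 2*(N+2) \<noteq> 0" "2 - 3*(N+2) \<noteq> 0" "1 - 4*(N+2)^2 \<noteq> 0"
    "N + 1 \<noteq> 0" "N + 2 \<noteq> 0" "N + 3 \<noteq> 0" "2*N + 3 \<noteq> 0" "2*N + 5 \<noteq> 0"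
proof -
  have "1 - 4*N^2 = (1 - 2*N) * (1 + 2*N)" "1 - 4*(N+1)^2 = (-1 - 2*N) * (3 + 2*N)"
    "1 - 4*(N+2)^2 = (-3 - 2*N) * (5 + 2*N)"
    by (simp_all add: power2_eq_square algebra_simps)
  then show "1 - 4*N^2 \<noteq> 0" "1 - 4*(N+1)^2 \<noteq> 0" "1 - 4*(N+2)^2 \<noteq> 0"
    using assms(1) by simp_all
qed (use assms in auto)

lemma cf_prefactor_recurrence:
  fixes N :: real
  assumes "N \<ge> 1" "2 * N \<noteq> 3"
  shows "rec_coeff0 N * cf_prefactor N
     + rec_coeff1 N * ((2*N+3)/(2*(N+2))) * cf_prefactor (N+1)
     + rec_coeff2 N * ((2*N+3)/(2*(N+2))) * ((2*N+5)/(2*(N+3))) * cf_prefactor (N+2) = 0"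
  unfolding rec_coeff0_def rec_coeff1_def rec_coeff2_def cf_prefactor_def
  by (simp only: frac_normalise cf_denominators_nonzero[OF assms]) algebra

lemma cf_rational_recurrence:
  fixes N :: real
  assumes "N \<ge> 1" "2 * N \<noteq> 3"
  shows "rec_coeff0 N * cf_prefactor N * cf_rational N
     + rec_coeff1 N * ((2*N+3)/(2*(N+2))) * cf_prefactor (N+1)
        * (cf_rational (N+1) + (2/(2*N+3) - 1/(2*(N+1))))
     + rec_coeff2 N * ((2*N+3)/(2*(N+2))) * ((2*N+5)/(2*(N+3))) * cf_prefactor (N+2)
        * (cf_rational (N+2) + (2/(2*N+3) - 1/(2*(N+1))) + (2/(2*N+5) - 1/(2*(N+2)))) = 0"
  unfolding rec_coeff0_def rec_coeff1_def rec_coeff2_def cf_prefactor_def cf_rational_def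
  by (simp only: frac_normalise cf_denominators_nonzero[OF assms]) algebra

lemma reciprocal_recurrence:
  fixes N :: real
  assumes "N \<ge> 0"
  shows "rec_coeff0 N / (N+1) + rec_coeff1 N / (N+2) + rec_coeff2 N / (N+3)
    = 3 * (N + 1) * (6 * N^2 + 43 * N + 27)"
proof -
  have "N + 1 \<noteq> 0" "N + 2 \<noteq> 0" "N + 3 \<noteq> 0"
    using assms by auto
  then show ?thesis
    unfolding rec_coeff0_def rec_coeff1_def rec_coeff2_def
    by (simp only: frac_normalise) algebra
qed

lemma closed_form_recurrence:
  assumes "n \<ge> 1"
  shows "rec_coeff0 (real n) * closed_form n + rec_coeff1 (real n) * closed_form (n+1)
      + rec_coeff2 (real n) * closed_form (n+2)
    = - (3 * (real n + 1) * (6 * (real n)^2 + 43 * real n + 27))"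
proof -
  define N u P where "N = real n" and "u = scaled_central n" and "P = harmonic_part n"
  define \<mu>0 \<mu>1 \<delta>0 \<delta>1 where "\<mu>0 = (2*N+3)/(2*(N+2))" and "\<mu>1 = (2*N+5)/(2*(N+3))"
    and "\<delta>0 = 2/(2*N+3) - 1/(2*(N+1))" and "\<delta>1 = 2/(2*N+5) - 1/(2*(N+2))"
  have "N \<ge> 1"
    using assms unfolding N_def by simp
  have "2 * N \<noteq> 3"
  proof
    assume "2 * N = 3"
    then have "2 * n = 3"
      unfolding N_def by (metis of_nat_mult of_nat_numeral of_nat_eq_iff)
    then show False
      by presburger
  qed
  have Y0: "closed_form n = cf_prefactor N * u * (P + cf_rational N) - 1/(N+1)"
    unfolding closed_form_def N_def u_def P_def ..
  have Y1: "closed_form (n+1) = cf_prefactor (N+1) * (u * \<mu>0) * (P + \<delta>0 + cf_rational (N+1)) - 1/(N+2)"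
    unfolding closed_form_def N_def u_def P_def \<mu>0_def \<delta>0_def
    by (simp add: scaled_central_Suc harmonic_part_Suc add_ac)
  have Y2: "closed_form (n+2) = cf_prefactor (N+2) * (u * \<mu>0 * \<mu>1) * (P + \<delta>0 + \<delta>1 + cf_rational (N+2)) - 1/(N+3)"
    unfolding closed_form_def N_def u_def P_def \<mu>0_def \<mu>1_def \<delta>0_def \<delta>1_def
    by (simp add: scaled_central_Suc harmonic_part_Suc add_ac)
  have "rec_coeff0 N * closed_form n + rec_coeff1 N * closed_form (n+1) + rec_coeff2 N * closed_form (n+2)
    = u * P * (rec_coeff0 N * cf_prefactor N + rec_coeff1 N * \<mu>0 * cf_prefactor (N+1)
               + rec_coeff2 N * \<mu>0 * \<mu>1 * cf_prefactor (N+2))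
      + u * (rec_coeff0 N * cf_prefactor N * cf_rational N
             + rec_coeff1 N * \<mu>0 * cf_prefactor (N+1) * (cf_rational (N+1) + \<delta>0)
             + rec_coeff2 N * \<mu>0 * \<mu>1 * cf_prefactor (N+2) * (cf_rational (N+2) + \<delta>0 + \<delta>1))
      - (rec_coeff0 N / (N+1) + rec_coeff1 N / (N+2) + rec_coeff2 N / (N+3))"
    unfolding Y0 Y1 Y2 by algebra
  also have "\<dots> = - (3 * (N + 1) * (6 * N^2 + 43 * N + 27))"
    using cf_prefactor_recurrence[OF \<open>N \<ge> 1\<close> \<open>2 * N \<noteq> 3\<close>]
      cf_rational_recurrence[OF \<open>N \<ge> 1\<close> \<open>2 * N \<noteq> 3\<close>] reciprocal_recurrence[of N] \<open>N \<ge> 1\<close>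
    unfolding \<mu>0_def \<mu>1_def \<delta>0_def \<delta>1_def by simp
  finally show ?thesis
    unfolding N_def .
qed

lemma closed_form_one: "closed_form 1 = (\<Sum>k\<le>1. summand 1 k)"
  by (simp add: closed_form_def cf_prefactor_def cf_rational_def scaled_central_def harmonic_part_def
      summand_def hypergeom_term_def harm_expand harm_Suc inverse_eq_divide)

lemma closed_form_two: "closed_form 2 = (\<Sum>k\<le>2. summand 2 k)"
  by (simp add: closed_form_def cf_prefactor_def cf_rational_def scaled_central_def harmonic_part_def
      summand_def hypergeom_term_def harm_expand harm_Suc inverse_eq_divide eval_nat_numeral)

theorem theorem12:
  fixes n :: nat
  assumes "n \<ge> 1"
  shows "(\<Sum>k=0..n. (-1/4::real)^k * real (n choose k) * real ((1+2*k) choose k)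
            * (real k)^2 * harm (1+2*k))
         = 3 * real n * (2 - 3 * real n) / ((3 - 2 * real n) * (1 - 4 * (real n)^2) * 4^n)
             * real ((1+2*n) choose n)
             * (2 * harm (1+2*n) - 3/2 * harm n
                - (3 - 8 * real n - 12 * (real n)^2) / (1 - 4 * (real n)^2)
                + (9 + real n * (3 - 25 * real n + 6 * (real n)^2))
                  / (3 * real n * (3 - 2 * real n) * (2 - 3 * real n)))
           - 1 / (1 + real n)"
proof -
  have "closed_form n = (\<Sum>k\<le>n. summand n k)"
  proof (rule second_order_recurrence_unique[where m=1 and a="\<lambda>n. rec_coeff0 (real n)"
        and b="\<lambda>n. rec_coeff1 (real n)" and c="\<lambda>n. rec_coeff2 (real n)"])
    show "rec_coeff2 (real n) \<noteq> 0" if "n \<ge> 1" for n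
      using rec_coeff2_pos[of "real n"] that by simp
  qed (use assms sum_summand_recurrence closed_form_recurrence closed_form_one closed_form_two in \<open>auto simp: numeral_2_eq_2\<close>)
  then show ?thesis
    unfolding closed_form_eq atLeast0AtMost summand_def hypergeom_term_def by simp
qed

end
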